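(* Let $H(x|t)$ and $E(x|t)$ be the row-to-row transfer matrices defined in the context. Then for independent spectral parameters $x,x'$: $$H(x)H(x')=H(x')H(x),\qquad E(x)E(x')=E(x')E(x),\qquad H(x)E(x')=E(x')H(x).$$ In particular, the operators $Z_n(x_1,\dots,x_n|t)=H(x_n|t)\cdots H(x_1|t)$ and $Z'_k(x_1,\dots,x_k|t)=E(x_k|t)\cdots E(x_1|t)$ are symmetric in the $x$-variables.
   Context: $\beta$ indeterminate, $x\oplus y=x+y+\beta xy$, $x\ominus y=(x-y)/(1+\beta y)$. $V=\mathbb{Z}v_0\oplus\mathbb{Z}v_1$ with $\sigma^-v_1=v_0,\sigma^-v_0=0,\sigma^+v_0=v_1,\sigma^+v_1=0$. The quantum space is $\mathcal{V}=V^{\otimes N}$ (scalars extended to rational functions in $\beta,t_1,\dots,t_N$, spectral parameters, and formal power series in $q$). For an auxiliary copy $V(x)$ and the $j$-th tensor factor of $\mathcal{V}$ define $L_j(x)=\sum_{a,b}e_{ab}\otimes L_{ab}$ with $L_{00}=\sigma^+\sigma^-+(x\ominus t_j)\sigma^-\sigma^+$, $L_{01}=(1+\beta\,x\ominus t_j)\sigma^+$, $L_{10}=\sigma^-$, $L_{11}=\sigma^-\sigma^+$ (the $\sigma$'s acting on the $j$-th factor, $e_{ab}v_b=v_a$ the matrix units on $V(x)$), and $L'_j(x)$ with $L'_{00}=\sigma^-\sigma^++(x\oplus t_j)\sigma^+\sigma^-$, $L'_{01}=\sigma^+$, $L'_{10}=(1+\beta\,x\oplus t_j)\sigma^-$,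 $L'_{11}=\sigma^+\sigma^-$. The monodromy matrix is $M(x|t)=L_N(x)\cdots L_2(x)L_1(x)=\sum_{a,b}e_{ab}\otimes M_{ab}$ and $A=M_{00},B=M_{01},C=M_{10},D=M_{11}\in\mathrm{End}\,\mathcal{V}$; $A',B',C',D'$ are defined likewise from $L'$. The transfer matrices are $H(x|t)=A(x|t)+qD(x|t)$ and $E(x|t)=A'(x|t)+qD'(x|t)$. *)

theory Defs
  imports "HOL-Library.Multiset"
begin

text \<open>Basis of V: v0 is False, v1 is True. A basis state of the quantum space
  V tensor N is a bool list of length N (entry j-1 is the state of site j).
  An operator on the quantum space is given by its matrix coefficients:
  Op s' s is the coefficient of basis vector s' in Op(s).\<close>

type_synonym 'a qop = "bool list \<Rightarrow> bool list \<Rightarrow> 'a"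

definition oplus :: "'a::field \<Rightarrow> 'a \<Rightarrow> 'a \<Rightarrow> 'a" where
  "oplus \<beta> x y = x + y + \<beta> * x * y"

definition ominus :: "'a::field \<Rightarrow> 'a \<Rightarrow> 'a \<Rightarrow> 'a" where
  "ominus \<beta> x y = (x - y) / (1 + \<beta> * y)"

text \<open>Local L-operator L_j(x): Lloc beta x t a b s' s is the coefficient of
  v_{s'} in L_{ab} v_s (a b are auxiliary indices, t = t_j).\<close>
definition Lloc :: "'a::field \<Rightarrow> 'a \<Rightarrow> 'a \<Rightarrow> bool \<Rightarrow> bool \<Rightarrow> bool \<Rightarrow> bool \<Rightarrow> 'a" where
  "Lloc \<beta> x t a b s' s =
     (let xm = ominus \<beta> x t in
      if \<not> a \<and> \<not> b then (if s' = s then (if s then 1 else xm) else 0)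
      else if \<not> a \<and> b then (if s' \<and> \<not> s then 1 + \<beta> * xm else 0)
      else if a \<and> \<not> b then (if \<not> s' \<and> s then 1 else 0)
      else (if \<not> s' \<and> \<not> s then 1 else 0))"

definition Lloc' :: "'a::field \<Rightarrow> 'a \<Rightarrow> 'a \<Rightarrow> bool \<Rightarrow> bool \<Rightarrow> bool \<Rightarrow> bool \<Rightarrow> 'a" where
  "Lloc' \<beta> x t a b s' s =
     (let xp = oplus \<beta> x t in
      if \<not> a \<and> \<not> b then (if s' = s then (if s then xp else 1) else 0)
      else if \<not> a \<and> b then (if s' \<and> \<not> s then 1 else 0)
      else if a \<and> \<not> b then (if \<not> s' \<and> s then 1 + \<beta> * xp else 0)
      else (if s' \<and> s then 1 else 0))"

text \<open>Monodromy entries M_{ab} = (L_N ... L_1)_{ab}, for the list ts = [t_1,...,t_N].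
  Since L_1 acts first: M(t_1#rest)_{ab} = sum_c M(rest)_{ac} (L_1)_{cb}.\<close>
fun mono :: "('a::field \<Rightarrow> bool \<Rightarrow> bool \<Rightarrow> bool \<Rightarrow> bool \<Rightarrow> 'a)
             \<Rightarrow> 'a list \<Rightarrow> bool \<Rightarrow> bool \<Rightarrow> 'a qop" where
  "mono L [] a b [] [] = (if a = b then 1 else 0)"
| "mono L (t # ts) a b (s' # ss') (s # ss) =
     mono L ts a False ss' ss * L t False b s' s + mono L ts a True ss' ss * L t True b s' s"
| "mono L _ a b _ _ = 0"

definition opmul :: "nat \<Rightarrow> 'a::field qop \<Rightarrow> 'a qop \<Rightarrow> 'a qop" where
  "opmul N P Q = (\<lambda>s' s. \<Sum>u\<in>{u. length u = N}. P s' u * Q u s)"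

definition opid :: "nat \<Rightarrow> 'a::field qop" where
  "opid N = (\<lambda>s' s. if s' = s \<and> length s = N then 1 else 0)"

definition Hop :: "'a::field \<Rightarrow> 'a \<Rightarrow> 'a list \<Rightarrow> 'a \<Rightarrow> 'a qop" where
  "Hop \<beta> q ts x = (\<lambda>s' s. mono (Lloc \<beta> x) ts False False s' s + q * mono (Lloc \<beta> x) ts True True s' s)"

definition Eop :: "'a::field \<Rightarrow> 'a \<Rightarrow> 'a list \<Rightarrow> 'a \<Rightarrow> 'a qop" where
  "Eop \<beta> q ts x = (\<lambda>s' s. mono (Lloc' \<beta> x) ts False False s' s + q * mono (Lloc' \<beta> x) ts True True s' s)"

text \<open>Z_n(x_1..x_n|t) = H(x_n) ... H(x_1), with xs = [x_1,...,x_n]; likewise Z'.\<close>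
definition Zop :: "'a::field \<Rightarrow> 'a \<Rightarrow> 'a list \<Rightarrow> 'a list \<Rightarrow> 'a qop" where
  "Zop \<beta> q ts xs = fold (\<lambda>x P. opmul (length ts) (Hop \<beta> q ts x) P) xs (opid (length ts))"

definition Zop' :: "'a::field \<Rightarrow> 'a \<Rightarrow> 'a list \<Rightarrow> 'a list \<Rightarrow> 'a qop" where
  "Zop' \<beta> q ts xs = fold (\<lambda>x P. opmul (length ts) (Eop \<beta> q ts x) P) xs (opid (length ts))"

end

theory Submission
  imports Defs "HOL-Computational_Algebra.Polynomial"
begin

(*
  Multiplied by 1 + \<beta> t\<^sub>j, both L-operators have polynomial entries, and any two of them satisfy an
  RLL relation R (L \<otimes> L') = (L' \<otimes> L) R with a six-vertex R-matrix that commutes with the twist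
  diag(1, q) \<otimes> diag(1, q). The train argument lifts this relation from one site to the two-row
  monodromy matrix. If S R = R S = k, conjugating by R under the twisted trace gives
  k T T' = k T' T. For the pair H, E the R-matrix is singular on the component 11; there the
  rank-one relation for the reversed pair E, H supplies the missing part of the trace.
  The scalar k is a nonzero polynomial in \<beta>, x, x', so the identities are proved over
  \<beta>, x, x' as indeterminates and then specialized. Products of pairwise commuting factors can be
  permuted, which gives the symmetry of Z and Z'.
*)

lemma sum_UNIV_bool: "(\<Sum>c\<in>UNIV. f c) = f False + f True"
  by (simp add: UNIV_bool add.commute)

lemma sum_UNIV_bool_pair:
  "(\<Sum>c\<in>UNIV. f c) = f (False, False) + f (False, True) + f (True, False) + f (True, True)"
proof -
  have U: "(UNIV :: (bool \<times> bool) set)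
      = {(False, False), (False, True), (True, False), (True, True)}"
    by auto
  show ?thesis unfolding U by (simp add: algebra_simps)
qed

lemma sum_matrix_assoc:
  fixes A :: "'i::finite \<Rightarrow> 'r::comm_semiring_0"
  shows "(\<Sum>c\<in>UNIV. A c * (\<Sum>d\<in>UNIV. B c d * C d))
      = (\<Sum>d\<in>UNIV. (\<Sum>c\<in>UNIV. A c * B c d) * C d)"
proof -
  have "(\<Sum>c\<in>UNIV. A c * (\<Sum>d\<in>UNIV. B c d * C d))
      = (\<Sum>c\<in>UNIV. \<Sum>d\<in>UNIV. A c * B c d * C d)"
    by (simp add: sum_distrib_left mult.assoc)
  also have "\<dots> = (\<Sum>d\<in>UNIV. \<Sum>c\<in>UNIV. A c * B c d * C d)"
    by (rule sum.swap)
  finally show ?thesis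
    by (simp add: sum_distrib_right)
qed

lemma intertwiner_mult:
  fixes R M M' W W' :: "'i::finite \<Rightarrow> 'i \<Rightarrow> 'r::comm_semiring_0"
  assumes RM: "\<And>a b. (\<Sum>c\<in>UNIV. R a c * M c b) = (\<Sum>c\<in>UNIV. M' a c * R c b)"
    and RW: "\<And>a b. (\<Sum>c\<in>UNIV. R a c * W c b) = (\<Sum>c\<in>UNIV. W' a c * R c b)"
  shows "(\<Sum>c\<in>UNIV. R a c * (\<Sum>d\<in>UNIV. M c d * W d b))
      = (\<Sum>c\<in>UNIV. (\<Sum>d\<in>UNIV. M' a d * W' d c) * R c b)"
proof -
  have "(\<Sum>c\<in>UNIV. R a c * (\<Sum>d\<in>UNIV. M c d * W d b))
      = (\<Sum>d\<in>UNIV. (\<Sum>c\<in>UNIV. R a c * M c d) * W d b)"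
    by (rule sum_matrix_assoc)
  also have "\<dots> = (\<Sum>d\<in>UNIV. (\<Sum>c\<in>UNIV. M' a c * R c d) * W d b)"
    by (simp only: RM)
  also have "\<dots> = (\<Sum>c\<in>UNIV. M' a c * (\<Sum>d\<in>UNIV. R c d * W d b))"
    by (rule sum_matrix_assoc[symmetric])
  also have "\<dots> = (\<Sum>c\<in>UNIV. M' a c * (\<Sum>d\<in>UNIV. W' c d * R d b))"
    by (simp only: RW)
  also have "\<dots> = (\<Sum>c\<in>UNIV. (\<Sum>d\<in>UNIV. M' a d * W' d c) * R c b)"
    by (rule sum_matrix_assoc)
  finally show ?thesis .
qed

(* k tr(g P n) = tr(g n R S) = tr(g R m S) = tr(R g m S) = tr(g m S R) = k tr(g P m) *)
lemma twisted_trace_commute: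
  fixes R S m n :: "'i::finite \<Rightarrow> 'i \<Rightarrow> 'r::comm_ring_1"
  assumes intertw: "\<And>a b. (\<Sum>c\<in>UNIV. R a c * m c b) = (\<Sum>c\<in>UNIV. n a c * R c b)"
    and SR: "\<And>a b. (\<Sum>c\<in>UNIV. S a c * R c b) = (if a = b then k * P a else 0)"
    and RS: "\<And>a b. (\<Sum>c\<in>UNIV. R a c * S c b) = (if a = b then k * P a else 0)"
    and diag: "\<And>a b. g a * R a b = R a b * g b"
  shows "k * (\<Sum>a\<in>UNIV. g a * P a * m a a) = k * (\<Sum>a\<in>UNIV. g a * P a * n a a)"
proof -
  have "k * (\<Sum>a\<in>UNIV. g a * P a * n a a)
      = (\<Sum>a\<in>UNIV. g a * (\<Sum>b\<in>UNIV. n a b * (if b = a then k * P b else 0)))"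
    by (simp add: sum_distrib_left algebra_simps if_distrib cong: if_cong)
  also have "\<dots> = (\<Sum>a\<in>UNIV. g a * (\<Sum>c\<in>UNIV. (\<Sum>b\<in>UNIV. n a b * R b c) * S c a))"
    by (simp only: RS[symmetric] sum_matrix_assoc)
  also have "\<dots> = (\<Sum>a\<in>UNIV. g a * (\<Sum>b\<in>UNIV. R a b * (\<Sum>c\<in>UNIV. m b c * S c a)))"
    by (simp only: intertw[symmetric] sum_matrix_assoc[symmetric])
  also have "\<dots> = (\<Sum>a\<in>UNIV. \<Sum>b\<in>UNIV. \<Sum>c\<in>UNIV. R a b * (g b * m b c * S c a))"
    by (simp add: sum_distrib_left diag mult.assoc[symmetric])
  also have "\<dots> = (\<Sum>b\<in>UNIV. \<Sum>c\<in>UNIV. \<Sum>a\<in>UNIV. R a b * (g b * m b c * S c a))"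
    by (subst sum.swap) (rule sum.cong[OF refl], rule sum.swap)
  also have "\<dots> = (\<Sum>b\<in>UNIV. g b * (\<Sum>c\<in>UNIV. m b c * (\<Sum>a\<in>UNIV. S c a * R a b)))"
    by (simp add: sum_distrib_left algebra_simps)
  also have "\<dots> = k * (\<Sum>a\<in>UNIV. g a * P a * m a a)"
    by (simp only: SR) (simp add: sum_distrib_left algebra_simps if_distrib cong: if_cong)
  finally show ?thesis by simp
qed

(* auxiliary indices a b, then physical indices s' s, as for Lloc *)
type_synonym 'r site_op = "bool \<Rightarrow> bool \<Rightarrow> bool \<Rightarrow> bool \<Rightarrow> 'r"

(* (1 + \<beta> t) L_j(x): clearing the denominator of x \<ominus> t makes every entry polynomial *)
definition L_H :: "'r::comm_ring_1 \<Rightarrow> 'r \<Rightarrow> 'r \<Rightarrow> 'r site_op" where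
  "L_H \<beta> x t a b s' s =
     (if \<not> a \<and> \<not> b then (if s' = s then (if s then 1 + \<beta> * t else x - t) else 0)
      else if \<not> a \<and> b then (if s' \<and> \<not> s then 1 + \<beta> * x else 0)
      else if a \<and> \<not> b then (if \<not> s' \<and> s then 1 + \<beta> * t else 0)
      else (if \<not> s' \<and> \<not> s then 1 + \<beta> * t else 0))"

(* L'_j(x) with x \<oplus> t expanded, so that it makes sense over any commutative ring *)
definition L_E :: "'r::comm_ring_1 \<Rightarrow> 'r \<Rightarrow> 'r \<Rightarrow> 'r site_op" where
  "L_E \<beta> x t a b s' s =
     (let xp = x + t + \<beta> * x * t in
      if \<not> a \<and> \<not> b then (if s' = s then (if s then xp else 1) else 0)
      else if \<not> a \<and> b then (if s' \<and> \<not> s then 1 else 0)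
      else if a \<and> \<not> b then (if \<not> s' \<and> s then 1 + \<beta> * xp else 0)
      else (if s' \<and> s then 1 else 0))"

lemma Lloc_rescaled:
  fixes \<beta> x t :: "'a::field"
  assumes "1 + \<beta> * t \<noteq> 0"
  shows "(1 + \<beta> * t) * Lloc \<beta> x t a b s' s = L_H \<beta> x t a b s' s"
proof -
  have "(1 + \<beta> * t) * (1 + \<beta> * ominus \<beta> x t) = 1 + \<beta> * x"
    using assms by (simp add: ominus_def field_simps)
  then show ?thesis
    using assms by (auto simp: Lloc_def L_H_def ominus_def Let_def)
qed

lemma Lloc'_eq_L_E: "Lloc' \<beta> x = L_E \<beta> x"
  by (simp add: fun_eq_iff Lloc'_def L_E_def oplus_def Let_def)

fun monodromy :: "'r::comm_ring_1 site_op list \<Rightarrow> bool \<Rightarrow> bool \<Rightarrow> 'r qop" where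
  "monodromy [] a b [] [] = (if a = b then 1 else 0)"
| "monodromy (L # Ls) a b (s' # ss') (s # ss) =
     monodromy Ls a False ss' ss * L False b s' s + monodromy Ls a True ss' ss * L True b s' s"
| "monodromy _ a b _ _ = 0"

lemma mono_eq_monodromy: "mono L ts a b s' s = monodromy (map L ts) a b s' s"
  by (induction L ts a b s' s rule: mono.induct) simp_all

lemma monodromy_scale:
  "monodromy (map (\<lambda>t a b s' s. c t * L t a b s' s) ts) a b s' s
     = prod_list (map c ts) * monodromy (map L ts) a b s' s"
proof (induction ts arbitrary: a b s' s)
  case Nil
  then show ?case by (cases s'; cases s) simp_all
next
  case (Cons t ts)
  then show ?case by (cases s'; cases s) (simp_all add: algebra_simps)
qed

definition transfer :: "'r::comm_ring_1 \<Rightarrow> 'r site_op list \<Rightarrow> 'r qop" where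
  "transfer q Ls s' s = monodromy Ls False False s' s + q * monodromy Ls True True s' s"

lemma transfer_L_H_eq_scaled_Hop:
  fixes \<beta> x :: "'a::field"
  assumes "\<forall>t\<in>set ts. 1 + \<beta> * t \<noteq> 0"
  shows "transfer q (map (L_H \<beta> x) ts)
      = (\<lambda>s' s. prod_list (map (\<lambda>t. 1 + \<beta> * t) ts) * Hop \<beta> q ts x s' s)"
proof -
  have "map (L_H \<beta> x) ts
      = map (\<lambda>t a b s' s. (1 + \<beta> * t) * Lloc \<beta> x t a b s' s) ts"
    using assms by (intro map_cong refl ext) (simp add: Lloc_rescaled)
  then show ?thesis
    by (intro ext)
       (simp only: transfer_def Hop_def monodromy_scale mono_eq_monodromy, simp add: algebra_simps)
qed

lemma Eop_eq_transfer_L_E: "Eop \<beta> q ts x = transfer q (map (L_E \<beta> x) ts)"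
  by (simp add: fun_eq_iff Eop_def transfer_def mono_eq_monodromy Lloc'_eq_L_E)

(* opmul over a commutative ring; the polynomial rings used below are not fields *)
definition opprod :: "nat \<Rightarrow> 'r::comm_ring_1 qop \<Rightarrow> 'r qop \<Rightarrow> 'r qop" where
  "opprod N P Q = (\<lambda>s' s. \<Sum>u\<in>{u. length u = N}. P s' u * Q u s)"

lemma opmul_eq_opprod: "opmul N P Q = opprod N P Q"
  by (simp add: opmul_def opprod_def)

lemma opprod_scale:
  "opprod N (\<lambda>s' s. c * P s' s) (\<lambda>s' s. d * Q s' s) s' s = c * d * opprod N P Q s' s"
  by (simp add: opprod_def sum_distrib_left algebra_simps)

lemma sum_lists_length_Suc:
  "(\<Sum>u\<in>{u::bool list. length u = Suc n}. f u)
      = (\<Sum>v\<in>UNIV. \<Sum>us\<in>{us. length us = n}. f (v # us))"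
proof -
  have lists: "{u::bool list. length u = Suc n} = (\<lambda>(v, us). v # us) ` (UNIV \<times> {us. length us = n})"
    by (auto simp: image_def length_Suc_conv)
  have inj: "inj_on (\<lambda>(v::bool, us). v # us) (UNIV \<times> {us. length us = n})"
    by (auto simp: inj_on_def)
  show ?thesis
    unfolding lists sum.reindex[OF inj] by (simp add: sum.cartesian_product split_beta)
qed

section \<open>RLL relations\<close>

type_synonym 'r aux_matrix = "bool \<times> bool \<Rightarrow> bool \<times> bool \<Rightarrow> 'r"

(* L1 \<otimes> L2 on the auxiliary space, L1 L2 on the physical site *)
definition double_site ::
    "'r::comm_ring_1 site_op \<Rightarrow> 'r site_op \<Rightarrow> bool \<times> bool \<Rightarrow> bool \<times> bool \<Rightarrow> bool \<Rightarrow> bool \<Rightarrow> 'r" where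
  "double_site L1 L2 a b s' s = (\<Sum>u\<in>UNIV. L1 (fst a) (fst b) s' u * L2 (snd a) (snd b) u s)"

definition intertwines :: "'r::comm_ring_1 aux_matrix \<Rightarrow> 'r site_op \<Rightarrow> 'r site_op \<Rightarrow> bool" where
  "intertwines R L1 L2 \<longleftrightarrow> (\<forall>a b s' s.
     (\<Sum>c\<in>UNIV. R a c * double_site L1 L2 c b s' s) = (\<Sum>c\<in>UNIV. double_site L2 L1 a c s' s * R c b))"

definition six_vertex :: "'r::zero \<Rightarrow> 'r \<Rightarrow> 'r \<Rightarrow> 'r \<Rightarrow> 'r \<Rightarrow> 'r \<Rightarrow> 'r aux_matrix" where
  "six_vertex r0 r11 r12 r21 r22 r3 a c =
    (if a = (False, False) \<and> c = (False, False) then r0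
     else if a = (False, True) \<and> c = (False, True) then r11
     else if a = (False, True) \<and> c = (True, False) then r12
     else if a = (True, False) \<and> c = (False, True) then r21
     else if a = (True, False) \<and> c = (True, False) then r22
     else if a = (True, True) \<and> c = (True, True) then r3 else 0)"

definition R_HH :: "'r::comm_ring_1 \<Rightarrow> 'r \<Rightarrow> 'r \<Rightarrow> 'r aux_matrix" where
  "R_HH \<beta> x y = six_vertex (1 + \<beta> * x) (1 + \<beta> * y) (y - x) 0 (1 + \<beta> * x) (1 + \<beta> * x)"

definition R_EE :: "'r::comm_ring_1 \<Rightarrow> 'r \<Rightarrow> 'r \<Rightarrow> 'r aux_matrix" where
  "R_EE \<beta> x y = six_vertex (1 + \<beta> * y) (1 + \<beta> * x) 0 (x - y) (1 + \<beta> * y) (1 + \<beta> * y)"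

definition R_HE :: "'r::comm_ring_1 \<Rightarrow> 'r \<Rightarrow> 'r \<Rightarrow> 'r aux_matrix" where
  "R_HE \<beta> x y = six_vertex (x + y + \<beta> * x * y) 1 1 1 ((1 + \<beta> * x) * (1 + \<beta> * y)) 0"

definition R_EH :: "'r::comm_ring_1 aux_matrix" where
  "R_EH = six_vertex 0 0 0 0 0 1"

lemma intertwines_HH: "intertwines (R_HH \<beta> x y) (L_H \<beta> x t) (L_H \<beta> y t)"
  unfolding intertwines_def R_HH_def
  by (intro allI; simp only: sum_UNIV_bool_pair double_site_def sum_UNIV_bool;
      simp add: six_vertex_def L_H_def split: prod.splits; auto simp: algebra_simps)

lemma intertwines_EE: "intertwines (R_EE \<beta> x y) (L_E \<beta> x t) (L_E \<beta> y t)"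
  unfolding intertwines_def R_EE_def
  by (intro allI; simp only: sum_UNIV_bool_pair double_site_def sum_UNIV_bool;
      simp add: six_vertex_def L_E_def Let_def split: prod.splits; auto simp: algebra_simps)

lemma intertwines_HE: "intertwines (R_HE \<beta> x y) (L_H \<beta> x t) (L_E \<beta> y t)"
  unfolding intertwines_def R_HE_def
  by (intro allI; simp only: sum_UNIV_bool_pair double_site_def sum_UNIV_bool;
      simp add: six_vertex_def L_H_def L_E_def Let_def split: prod.splits; auto simp: algebra_simps)

lemma intertwines_EH: "intertwines R_EH (L_E \<beta> y t) (L_H \<beta> x t)"
  unfolding intertwines_def R_EH_def
  by (intro allI; simp only: sum_UNIV_bool_pair double_site_def sum_UNIV_bool;
      simp add: six_vertex_def L_H_def L_E_def Let_def split: prod.splits)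

lemma list_all2_intertwines_map:
  assumes "\<And>t. intertwines R (L1 t) (L2 t)"
  shows "list_all2 (intertwines R) (map L1 ts) (map L2 ts)"
  by (simp add: list_all2_map1 list_all2_map2 list_all2_refl assms)

section \<open>Commuting transfer matrices\<close>

definition double_monodromy ::
    "'r::comm_ring_1 site_op list \<Rightarrow> 'r site_op list \<Rightarrow> bool \<times> bool \<Rightarrow> bool \<times> bool \<Rightarrow> 'r qop" where
  "double_monodromy Ls1 Ls2 a b s' s =
     (\<Sum>u\<in>{u. length u = length Ls1}. monodromy Ls1 (fst a) (fst b) s' u * monodromy Ls2 (snd a) (snd b) u s)"

lemma double_monodromy_Nil:
  "double_monodromy [] [] a b s' s = of_bool (s' = [] \<and> s = [] \<and> a = b)"
  by (cases a; cases b; cases s'; cases s) (auto simp: double_monodromy_def)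

lemma double_monodromy_Cons:
  "double_monodromy (L1 # Ls1) (L2 # Ls2) a b (x' # xs') (x # xs)
     = (\<Sum>c\<in>UNIV. double_monodromy Ls1 Ls2 a c xs' xs * double_site L1 L2 c b x' x)"
  unfolding double_monodromy_def double_site_def
  by (simp add: sum_lists_length_Suc sum_UNIV_bool sum_UNIV_bool_pair sum_distrib_right
      sum.distrib[symmetric]) (rule sum.cong; simp add: algebra_simps)

lemma double_monodromy_Cons_Nil:
  "double_monodromy (L1 # Ls1) (L2 # Ls2) a b [] s = 0"
  "double_monodromy (L1 # Ls1) (L2 # Ls2) a b s' [] = 0"
proof -
  have "monodromy (L2 # Ls2) c d u [] = 0" for c d u
    by (cases u) simp_all
  then show "double_monodromy (L1 # Ls1) (L2 # Ls2) a b s' [] = 0"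
    by (simp add: double_monodromy_def)
qed (simp add: double_monodromy_def)

lemma double_monodromy_intertwines:
  assumes "list_all2 (intertwines R) Ls1 Ls2"
  shows "(\<Sum>c\<in>UNIV. R a c * double_monodromy Ls1 Ls2 c b s' s)
       = (\<Sum>c\<in>UNIV. double_monodromy Ls2 Ls1 a c s' s * R c b)"
  using assms
proof (induction arbitrary: a b s' s rule: list_all2_induct)
  case Nil
  show ?case
    by (cases "s' = [] \<and> s = []") (auto simp: double_monodromy_Nil)
next
  case (Cons L1 Ls1 L2 Ls2)
  have site: "(\<Sum>c\<in>UNIV. R a c * double_site L1 L2 c b x' x)
      = (\<Sum>c\<in>UNIV. double_site L2 L1 a c x' x * R c b)"
    for a b x' x
    using Cons.hyps(1) unfolding intertwines_def by blast
  consider x' xs' x xs where "s' = x' # xs'" "s = x # xs" | "s' = []" | "s = []"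
    by (cases s'; cases s) auto
  then show ?case
  proof cases
    case 1
    show ?thesis
      unfolding 1 double_monodromy_Cons by (rule intertwiner_mult[OF Cons.IH site])
  qed (simp_all add: double_monodromy_Cons_Nil)
qed

definition twist :: "'r::comm_ring_1 \<Rightarrow> bool \<times> bool \<Rightarrow> 'r" where
  "twist q a = (if fst a then q else 1) * (if snd a then q else 1)"

lemma twist_six_vertex:
  "twist q a * six_vertex r0 r11 r12 r21 r22 r3 a b = six_vertex r0 r11 r12 r21 r22 r3 a b * twist q b"
  by (cases a; cases b) (auto simp: six_vertex_def twist_def)

lemma opprod_transfer:
  "opprod (length Ls1) (transfer q Ls1) (transfer q Ls2) s' s
     = (\<Sum>a\<in>UNIV. twist q a * double_monodromy Ls1 Ls2 a a s' s)"
  by (simp add: opprod_def transfer_def double_monodromy_def sum_UNIV_bool_pair twist_def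
      sum_distrib_left sum.distrib[symmetric] algebra_simps)

lemma transfer_commute_weighted:
  assumes "list_all2 (intertwines R) Ls1 Ls2"
    and "\<And>a b. (\<Sum>c\<in>UNIV. S a c * R c b) = (if a = b then k * P a else 0)"
    and "\<And>a b. (\<Sum>c\<in>UNIV. R a c * S c b) = (if a = b then k * P a else 0)"
    and "\<And>a b. twist q a * R a b = R a b * twist q b"
  shows "k * (\<Sum>a\<in>UNIV. twist q a * P a * double_monodromy Ls1 Ls2 a a s' s)
       = k * (\<Sum>a\<in>UNIV. twist q a * P a * double_monodromy Ls2 Ls1 a a s' s)"
  by (rule twisted_trace_commute[OF double_monodromy_intertwines[OF assms(1)] assms(2-4)])

lemma transfer_commute_scaled:
  assumes "list_all2 (intertwines R) Ls1 Ls2"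
    and SR: "\<And>a b. (\<Sum>c\<in>UNIV. S a c * R c b) = (if a = b then k else 0)"
    and RS: "\<And>a b. (\<Sum>c\<in>UNIV. R a c * S c b) = (if a = b then k else 0)"
    and "\<And>a b. twist q a * R a b = R a b * twist q b"
  shows "k * opprod (length Ls1) (transfer q Ls1) (transfer q Ls2) s' s
       = k * opprod (length Ls2) (transfer q Ls2) (transfer q Ls1) s' s"
proof -
  have "k * (\<Sum>a\<in>UNIV. twist q a * 1 * double_monodromy Ls1 Ls2 a a s' s)
      = k * (\<Sum>a\<in>UNIV. twist q a * 1 * double_monodromy Ls2 Ls1 a a s' s)"
    by (rule transfer_commute_weighted[where S = S, OF assms(1) _ _ assms(4)]) (simp_all add: SR RS)
  then show ?thesis
    by (simp add: opprod_transfer)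
qed

lemma R_HH_unitary:
  "(\<Sum>c\<in>UNIV. R_HH \<beta> y x a c * R_HH \<beta> x y c b)
      = (if a = b then (1 + \<beta> * x) * (1 + \<beta> * y) else 0)"
  "(\<Sum>c\<in>UNIV. R_HH \<beta> x y a c * R_HH \<beta> y x c b)
      = (if a = b then (1 + \<beta> * x) * (1 + \<beta> * y) else 0)"
  by (cases a; cases b; simp add: sum_UNIV_bool_pair R_HH_def six_vertex_def algebra_simps)+

lemma R_EE_unitary:
  "(\<Sum>c\<in>UNIV. R_EE \<beta> y x a c * R_EE \<beta> x y c b)
      = (if a = b then (1 + \<beta> * x) * (1 + \<beta> * y) else 0)"
  "(\<Sum>c\<in>UNIV. R_EE \<beta> x y a c * R_EE \<beta> y x c b)
      = (if a = b then (1 + \<beta> * x) * (1 + \<beta> * y) else 0)"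
  by (cases a; cases b; simp add: sum_UNIV_bool_pair R_EE_def six_vertex_def algebra_simps)+

definition S_HE :: "'r::comm_ring_1 \<Rightarrow> 'r \<Rightarrow> 'r \<Rightarrow> 'r aux_matrix" where
  "S_HE \<beta> x y =
     (let r = x + y + \<beta> * x * y; p = (1 + \<beta> * x) * (1 + \<beta> * y)
      in six_vertex (p - 1) (r * p) (- r) (- r) r 0)"

lemma R_HE_S_HE:
  "(\<Sum>c\<in>UNIV. S_HE \<beta> x y a c * R_HE \<beta> x y c b) = (if a = b
     then (x + y + \<beta> * x * y) * ((1 + \<beta> * x) * (1 + \<beta> * y) - 1) * of_bool (a \<noteq> (True, True)) else 0)"
  "(\<Sum>c\<in>UNIV. R_HE \<beta> x y a c * S_HE \<beta> x y c b) = (if a = b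
     then (x + y + \<beta> * x * y) * ((1 + \<beta> * x) * (1 + \<beta> * y) - 1) * of_bool (a \<noteq> (True, True)) else 0)"
  by (cases a; cases b; simp add: sum_UNIV_bool_pair R_HE_def S_HE_def six_vertex_def Let_def algebra_simps)+

lemma R_EH_idempotent:
  "(\<Sum>c\<in>UNIV. R_EH a c * R_EH c b)
    = (if a = b then of_bool (a = (True, True)) else 0)"
  by (cases a; cases b) (simp_all add: sum_UNIV_bool_pair R_EH_def six_vertex_def)

lemma transfer_HH_commute_scaled:
  "(1 + \<beta> * x) * (1 + \<beta> * y) *
     opprod (length ts) (transfer q (map (L_H \<beta> x) ts)) (transfer q (map (L_H \<beta> y) ts)) s' s
   = (1 + \<beta> * x) * (1 + \<beta> * y) *
     opprod (length ts) (transfer q (map (L_H \<beta> y) ts)) (transfer q (map (L_H \<beta> x) ts)) s' s"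
  using transfer_commute_scaled[OF list_all2_intertwines_map[OF intertwines_HH] R_HH_unitary]
  by (simp add: R_HH_def twist_six_vertex)

lemma transfer_EE_commute_scaled:
  "(1 + \<beta> * x) * (1 + \<beta> * y) *
     opprod (length ts) (transfer q (map (L_E \<beta> x) ts)) (transfer q (map (L_E \<beta> y) ts)) s' s
   = (1 + \<beta> * x) * (1 + \<beta> * y) *
     opprod (length ts) (transfer q (map (L_E \<beta> y) ts)) (transfer q (map (L_E \<beta> x) ts)) s' s"
  using transfer_commute_scaled[OF list_all2_intertwines_map[OF intertwines_EE] R_EE_unitary]
  by (simp add: R_EE_def twist_six_vertex)

(* R_HE vanishes on the component 11, which is covered instead by the relation with R_EH *)
lemma transfer_HE_commute_scaled:
  fixes \<beta> x y :: "'r::comm_ring_1"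
  defines "k \<equiv> (x + y + \<beta> * x * y) * ((1 + \<beta> * x) * (1 + \<beta> * y) - 1)"
  shows "k * opprod (length ts) (transfer q (map (L_H \<beta> x) ts)) (transfer q (map (L_E \<beta> y) ts)) s' s
       = k * opprod (length ts) (transfer q (map (L_E \<beta> y) ts)) (transfer q (map (L_H \<beta> x) ts)) s' s"
proof -
  let ?A = "map (L_H \<beta> x) ts" and ?B = "map (L_E \<beta> y) ts"
  let ?nonfull = "\<lambda>a::bool \<times> bool. of_bool (a \<noteq> (True, True)) :: 'r"
  let ?full = "\<lambda>a::bool \<times> bool. of_bool (a = (True, True)) :: 'r"
  have nonfull: "k * (\<Sum>a\<in>UNIV. twist q a * ?nonfull a * double_monodromy ?A ?B a a s' s)
      = k * (\<Sum>a\<in>UNIV. twist q a * ?nonfull a * double_monodromy ?B ?A a a s' s)"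
    unfolding k_def
    by (rule transfer_commute_weighted[OF list_all2_intertwines_map[OF intertwines_HE] R_HE_S_HE])
       (simp add: R_HE_def twist_six_vertex)
  have twist_R_EH: "twist q a * R_EH a b = R_EH a b * twist q b" for a b
    by (simp add: R_EH_def twist_six_vertex)
  have "1 * (\<Sum>a\<in>UNIV. twist q a * ?full a * double_monodromy ?B ?A a a s' s)
      = 1 * (\<Sum>a\<in>UNIV. twist q a * ?full a * double_monodromy ?A ?B a a s' s)"
    by (rule transfer_commute_weighted[where S = R_EH, OF list_all2_intertwines_map[OF intertwines_EH]
          _ _ twist_R_EH]) (simp_all add: R_EH_idempotent)
  then have full: "(\<Sum>a\<in>UNIV. twist q a * ?full a * double_monodromy ?A ?B a a s' s)
      = (\<Sum>a\<in>UNIV. twist q a * ?full a * double_monodromy ?B ?A a a s' s)"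
    by simp
  have split: "(\<Sum>a\<in>UNIV. twist q a * double_monodromy C D a a s' s)
      = (\<Sum>a\<in>UNIV. twist q a * ?nonfull a * double_monodromy C D a a s' s)
      + (\<Sum>a\<in>UNIV. twist q a * ?full a * double_monodromy C D a a s' s)" for C D
    unfolding sum.distrib[symmetric] by (rule sum.cong) (auto simp: of_bool_def)
  have "k * opprod (length ts) (transfer q ?A) (transfer q ?B) s' s
      = k * (\<Sum>a\<in>UNIV. twist q a * ?nonfull a * double_monodromy ?A ?B a a s' s)
      + k * (\<Sum>a\<in>UNIV. twist q a * ?full a * double_monodromy ?A ?B a a s' s)"
    using opprod_transfer[of ?A q ?B s' s] by (simp add: split distrib_left)
  also have "\<dots> = k * (\<Sum>a\<in>UNIV. twist q a * ?nonfull a * double_monodromy ?B ?A a a s' s)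
      + k * (\<Sum>a\<in>UNIV. twist q a * ?full a * double_monodromy ?B ?A a a s' s)"
    by (simp only: nonfull full)
  also have "\<dots> = k * opprod (length ts) (transfer q ?B) (transfer q ?A) s' s"
    using opprod_transfer[of ?B q ?A s' s] by (simp add: split distrib_left)
  finally show ?thesis .
qed

section \<open>Specialization of polynomial identities\<close>

definition ring_homomorphism :: "('r::comm_ring_1 \<Rightarrow> 's::comm_ring_1) \<Rightarrow> bool" where
  "ring_homomorphism h \<longleftrightarrow>
     (\<forall>a b. h (a + b) = h a + h b) \<and> (\<forall>a b. h (a * b) = h a * h b) \<and> h 1 = 1"

lemma ring_homomorphism_simps:
  assumes "ring_homomorphism h"
  shows "h (a + b) = h a + h b" "h (a * b) = h a * h b" "h 1 = 1" "h 0 = 0"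
    "h (- a) = - h a" "h (a - b) = h a - h b"
proof -
  have add: "h (a + b) = h a + h b" for a b
    using assms by (simp add: ring_homomorphism_def)
  show "h (a + b) = h a + h b" "h (a * b) = h a * h b" "h 1 = 1"
    using assms by (simp_all add: ring_homomorphism_def)
  show zero: "h 0 = 0"
    using add[of 0 0] by simp
  have neg: "h (- c) = - h c" for c
    using add[of "- c" c] zero by (simp add: eq_neg_iff_add_eq_0)
  then show "h (- a) = - h a" .
  show "h (a - b) = h a - h b"
    by (simp add: add neg diff_conv_add_uminus del: add_uminus_conv_diff)
qed

lemma ring_homomorphism_sum:
  "ring_homomorphism h \<Longrightarrow> h (sum f A) = (\<Sum>x\<in>A. h (f x))"
  by (induction A rule: infinite_finite_induct) (simp_all add: ring_homomorphism_simps)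

definition map_site :: "('r \<Rightarrow> 's) \<Rightarrow> 'r site_op \<Rightarrow> 's site_op" where
  "map_site h L a b s' s = h (L a b s' s)"

lemma ring_homomorphism_monodromy:
  assumes "ring_homomorphism h"
  shows "h (monodromy Ls a b s' s) = monodromy (map (map_site h) Ls) a b s' s"
  using assms
  by (induction Ls a b s' s rule: monodromy.induct) (simp_all add: ring_homomorphism_simps map_site_def)

lemma ring_homomorphism_transfer:
  "ring_homomorphism h \<Longrightarrow> h (transfer q Ls s' s)
      = transfer (h q) (map (map_site h) Ls) s' s"
  by (simp add: transfer_def ring_homomorphism_simps ring_homomorphism_monodromy)

lemma ring_homomorphism_opprod:
  "ring_homomorphism h \<Longrightarrow> h (opprod N P Q s' s)
      = opprod N (\<lambda>s' s. h (P s' s)) (\<lambda>s' s. h (Q s' s)) s' s"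
  by (simp add: opprod_def ring_homomorphism_sum ring_homomorphism_simps)

lemma map_site_L_H:
  "ring_homomorphism h \<Longrightarrow> map_site h (L_H \<beta> x t) = L_H (h \<beta>) (h x) (h t)"
  by (simp add: fun_eq_iff map_site_def L_H_def ring_homomorphism_simps)

lemma map_site_L_E:
  "ring_homomorphism h \<Longrightarrow> map_site h (L_E \<beta> x t) = L_E (h \<beta>) (h x) (h t)"
  by (simp add: fun_eq_iff map_site_def L_E_def Let_def ring_homomorphism_simps)

(* 'a poly poly poly is 'a[\<beta>][x][y], with \<beta> innermost *)
definition eval3 :: "'a::comm_ring_1 \<Rightarrow> 'a \<Rightarrow> 'a \<Rightarrow> 'a poly poly poly \<Rightarrow> 'a" where
  "eval3 b x y P = poly (poly (poly P [:[:y:]:]) [:x:]) b"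

definition const3 :: "'a::comm_ring_1 \<Rightarrow> 'a poly poly poly" where
  "const3 c = [:[:[:c:]:]:]"

definition var_beta :: "'a::comm_ring_1 poly poly poly" where
  "var_beta = [:[:[:0, 1:]:]:]"

definition var_x :: "'a::comm_ring_1 poly poly poly" where
  "var_x = [:[:0, 1:]:]"

definition var_y :: "'a::comm_ring_1 poly poly poly" where
  "var_y = [:0, 1:]"

lemma ring_homomorphism_eval3: "ring_homomorphism (eval3 b x y)"
  by (simp add: ring_homomorphism_def eval3_def)

lemma eval3_simps [simp]:
  "eval3 b x y (const3 c) = c" "eval3 b x y var_beta = b" "eval3 b x y var_x = x" "eval3 b x y var_y = y"
  by (simp_all add: eval3_def const3_def var_beta_def var_x_def var_y_def)

lemmas eval3_hom_simps [simp] = ring_homomorphism_simps[OF ring_homomorphism_eval3]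

(* K may vanish at particular points, but not as a polynomial *)
lemma opprod_commute_by_specialization:
  fixes K :: "'a::idom poly poly poly"
  assumes "K * opprod N P Q s' s = K * opprod N Q P s' s"
    and "eval3 u v w K \<noteq> 0"
  shows "opprod N (\<lambda>s' s. eval3 b x y (P s' s)) (\<lambda>s' s. eval3 b x y (Q s' s)) s' s
       = opprod N (\<lambda>s' s. eval3 b x y (Q s' s)) (\<lambda>s' s. eval3 b x y (P s' s)) s' s"
proof -
  have "K \<noteq> 0"
    using assms(2) by auto
  with assms(1) have "opprod N P Q s' s = opprod N Q P s' s"
    by simp
  then show ?thesis
    by (simp flip: ring_homomorphism_opprod[OF ring_homomorphism_eval3])
qed

lemma eval3_transfer:
  "(\<lambda>s' s. eval3 b x y (transfer q Ls s' s)) = transfer (eval3 b x y q) (map (map_site (eval3 b x y)) Ls)"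
  by (simp add: fun_eq_iff ring_homomorphism_transfer[OF ring_homomorphism_eval3])

lemma map_site_eval3_L_H:
  "map_site (eval3 b x y) (L_H var_beta v (const3 t)) = L_H b (eval3 b x y v) t"
  by (simp add: map_site_L_H[OF ring_homomorphism_eval3])

lemma map_site_eval3_L_E:
  "map_site (eval3 b x y) (L_E var_beta v (const3 t)) = L_E b (eval3 b x y v) t"
  by (simp add: map_site_L_E[OF ring_homomorphism_eval3])

lemma transfer_HH_commute:
  fixes \<beta> q x y :: "'a::idom"
  shows "opprod (length ts) (transfer q (map (L_H \<beta> x) ts)) (transfer q (map (L_H \<beta> y) ts)) s' s
       = opprod (length ts) (transfer q (map (L_H \<beta> y) ts)) (transfer q (map (L_H \<beta> x) ts)) s' s"
  using opprod_commute_by_specialization[where u = 0 and v = 0 and w = 0 and b = \<beta> and x = x and y = y,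
      OF transfer_HH_commute_scaled[where \<beta> = var_beta and x = var_x and y = var_y and q = "const3 q" and ts = "map const3 ts"]]
  by (simp add: eval3_transfer comp_def map_site_eval3_L_H)

lemma transfer_EE_commute:
  fixes \<beta> q x y :: "'a::idom"
  shows "opprod (length ts) (transfer q (map (L_E \<beta> x) ts)) (transfer q (map (L_E \<beta> y) ts)) s' s
       = opprod (length ts) (transfer q (map (L_E \<beta> y) ts)) (transfer q (map (L_E \<beta> x) ts)) s' s"
  using opprod_commute_by_specialization[where u = 0 and v = 0 and w = 0 and b = \<beta> and x = x and y = y,
      OF transfer_EE_commute_scaled[where \<beta> = var_beta and x = var_x and y = var_y and q = "const3 q" and ts = "map const3 ts"]]
  by (simp add: eval3_transfer comp_def map_site_eval3_L_E)

lemma transfer_HE_commute: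
  fixes \<beta> q x y :: "'a::idom"
  shows "opprod (length ts) (transfer q (map (L_H \<beta> x) ts)) (transfer q (map (L_E \<beta> y) ts)) s' s
       = opprod (length ts) (transfer q (map (L_E \<beta> y) ts)) (transfer q (map (L_H \<beta> x) ts)) s' s"
  using opprod_commute_by_specialization[where u = 1 and v = 1 and w = 0 and b = \<beta> and x = x and y = y,
      OF transfer_HE_commute_scaled[where \<beta> = var_beta and x = var_x and y = var_y and q = "const3 q" and ts = "map const3 ts"]]
  by (simp add: eval3_transfer comp_def map_site_eval3_L_H map_site_eval3_L_E)

section \<open>The transfer matrices H and E\<close>

lemma Hop_commute:
  fixes \<beta> q x y :: "'a::field"
  assumes "\<forall>t\<in>set ts. 1 + \<beta> * t \<noteq> 0"
  shows "opmul (length ts) (Hop \<beta> q ts x) (Hop \<beta> q ts y)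
      = opmul (length ts) (Hop \<beta> q ts y) (Hop \<beta> q ts x)"
proof (intro ext)
  fix s' s
  let ?c = "prod_list (map (\<lambda>t. 1 + \<beta> * t) ts)"
  have "?c \<noteq> 0"
    using assms by (auto simp: prod_list_zero_iff)
  moreover have "?c * ?c * opmul (length ts) (Hop \<beta> q ts x) (Hop \<beta> q ts y) s' s
      = ?c * ?c * opmul (length ts) (Hop \<beta> q ts y) (Hop \<beta> q ts x) s' s"
    using transfer_HH_commute[where \<beta> = \<beta> and x = x and y = y and q = q and ts = ts and s' = s' and s = s]
    by (simp add: transfer_L_H_eq_scaled_Hop[OF assms] opprod_scale opmul_eq_opprod)
  ultimately show "opmul (length ts) (Hop \<beta> q ts x) (Hop \<beta> q ts y) s' s
      = opmul (length ts) (Hop \<beta> q ts y) (Hop \<beta> q ts x) s' s"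
    by simp
qed

lemma Eop_commute:
  "opmul (length ts) (Eop \<beta> q ts x) (Eop \<beta> q ts y)
      = opmul (length ts) (Eop \<beta> q ts y) (Eop \<beta> q ts x)"
  unfolding Eop_eq_transfer_L_E opmul_eq_opprod by (intro ext) (rule transfer_EE_commute)

lemma Hop_Eop_commute:
  fixes \<beta> q x y :: "'a::field"
  assumes "\<forall>t\<in>set ts. 1 + \<beta> * t \<noteq> 0"
  shows "opmul (length ts) (Hop \<beta> q ts x) (Eop \<beta> q ts y)
      = opmul (length ts) (Eop \<beta> q ts y) (Hop \<beta> q ts x)"
proof (intro ext)
  fix s' s
  let ?c = "prod_list (map (\<lambda>t. 1 + \<beta> * t) ts)"
  have "?c \<noteq> 0"
    using assms by (auto simp: prod_list_zero_iff)
  moreover have "?c * opmul (length ts) (Hop \<beta> q ts x) (Eop \<beta> q ts y) s' s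
      = ?c * opmul (length ts) (Eop \<beta> q ts y) (Hop \<beta> q ts x) s' s"
    using transfer_HE_commute[where \<beta> = \<beta> and x = x and y = y and q = q and ts = ts and s' = s' and s = s]
      opprod_scale[of _ ?c _ 1] opprod_scale[of _ 1 _ ?c]
    by (simp add: transfer_L_H_eq_scaled_Hop[OF assms] Eop_eq_transfer_L_E opmul_eq_opprod)
  ultimately show "opmul (length ts) (Hop \<beta> q ts x) (Eop \<beta> q ts y) s' s
      = opmul (length ts) (Eop \<beta> q ts y) (Hop \<beta> q ts x) s' s"
    by simp
qed

lemma opmul_assoc: "opmul N (opmul N A B) C = opmul N A (opmul N B C)"
proof (intro ext)
  fix s' s
  have "opmul N (opmul N A B) C s' s
      = (\<Sum>u\<in>{u. length u = N}. \<Sum>v\<in>{u. length u = N}. A s' v * B v u * C u s)"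
    by (simp add: opmul_def sum_distrib_right)
  also have "\<dots> = (\<Sum>v\<in>{u. length u = N}. \<Sum>u\<in>{u. length u = N}. A s' v * B v u * C u s)"
    by (rule sum.swap)
  also have "\<dots> = opmul N A (opmul N B C) s' s"
    by (simp add: opmul_def sum_distrib_left mult.assoc)
  finally show "opmul N (opmul N A B) C s' s = opmul N A (opmul N B C) s' s" .
qed

lemma fold_opmul_permute:
  assumes "\<And>x y. opmul N (F x) (F y) = opmul N (F y) (F x)"
    and "mset xs = mset ys"
  shows "fold (\<lambda>x P. opmul N (F x) P) xs I = fold (\<lambda>x P. opmul N (F x) P) ys I"
proof -
  have "fold (\<lambda>x P. opmul N (F x) P) xs = fold (\<lambda>x P. opmul N (F x) P) ys"
  proof (rule fold_multiset_equiv)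
    show "(\<lambda>P. opmul N (F x) P) \<circ> (\<lambda>P. opmul N (F y) P)
        = (\<lambda>P. opmul N (F y) P) \<circ> (\<lambda>P. opmul N (F x) P)"
      for x y by (simp add: fun_eq_iff opmul_assoc[symmetric] assms(1))
  qed (rule assms(2))
  then show ?thesis
    by simp
qed

theorem mainTheorem4:
  fixes \<beta> q x x' :: "'a::field" and ts :: "'a list"
  assumes "\<forall>t\<in>set ts. 1 + \<beta> * t \<noteq> 0"
  shows "opmul (length ts) (Hop \<beta> q ts x) (Hop \<beta> q ts x') = opmul (length ts) (Hop \<beta> q ts x') (Hop \<beta> q ts x)
       \<and> opmul (length ts) (Eop \<beta> q ts x) (Eop \<beta> q ts x') = opmul (length ts) (Eop \<beta> q ts x') (Eop \<beta> q ts x)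
       \<and> opmul (length ts) (Hop \<beta> q ts x) (Eop \<beta> q ts x') = opmul (length ts) (Eop \<beta> q ts x') (Hop \<beta> q ts x)
       \<and> (\<forall>xs ys. mset xs = mset ys \<longrightarrow> Zop \<beta> q ts xs = Zop \<beta> q ts ys)
       \<and> (\<forall>xs ys. mset xs = mset ys \<longrightarrow> Zop' \<beta> q ts xs = Zop' \<beta> q ts ys)"
proof (intro conjI allI impI)
  show "opmul (length ts) (Hop \<beta> q ts x) (Hop \<beta> q ts x')
      = opmul (length ts) (Hop \<beta> q ts x') (Hop \<beta> q ts x)"
    by (rule Hop_commute[OF assms])
  show "opmul (length ts) (Eop \<beta> q ts x) (Eop \<beta> q ts x')
      = opmul (length ts) (Eop \<beta> q ts x') (Eop \<beta> q ts x)"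
    by (rule Eop_commute)
  show "opmul (length ts) (Hop \<beta> q ts x) (Eop \<beta> q ts x')
      = opmul (length ts) (Eop \<beta> q ts x') (Hop \<beta> q ts x)"
    by (rule Hop_Eop_commute[OF assms])
  fix xs ys :: "'a list"
  assume perm: "mset xs = mset ys"
  show "Zop \<beta> q ts xs = Zop \<beta> q ts ys"
    unfolding Zop_def by (rule fold_opmul_permute[where F = "Hop \<beta> q ts", OF Hop_commute[OF assms] perm])
  show "Zop' \<beta> q ts xs = Zop' \<beta> q ts ys"
    unfolding Zop'_def by (rule fold_opmul_permute[where F = "Eop \<beta> q ts", OF Eop_commute perm])
qed

end
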